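(* Let $a<b$, $n\ge 1$, let $P_1=P_1^T\in\mathbb{R}^{n\times n}$ be invertible and $P_0=-P_0^T\in\mathbb{R}^{n\times n}$. Let $\mathcal{X}=L^2([a,b];\mathbb{R}^n)$ with the standard inner product $\langle\cdot,\cdot\rangle_{L^2}$, let $Z$ be a real Hilbert space, let $H\in\mathcal{L}(Z,\mathcal{X})$ and let $H^*\in\mathcal{L}(\mathcal{X},Z)$ be its adjoint. Fix a real number $\delta t>0$. For $e\in H^1([a,b];\mathbb{R}^n)$ put $\mathcal{J}e:=P_1\frac{de}{d\zeta}+P_0e$. On $\mathcal{B}=\mathcal{F}\times\mathcal{E}$ with $\mathcal{F}=\mathcal{E}=\mathcal{X}\times Z\times\mathbb{R}^n$, whose elements are written $(\delta f_\varepsilon,\delta f_w,\delta f_\partial,e_\varepsilon,e_w,e_\partial)$, consider the symmetric bilinear pairing $$\langle b^1,b^2\rangle_+=\langle e^1_\varepsilon,\delta f^2_\varepsilon\rangle_{L^2}+\langle e^2_\varepsilon,\delta f^1_\varepsilon\rangle_{L^2}-\langle e^1_\partial,\delta f^2_\partial\rangle_{\mathbb{R}^n}-\langle e^2_\partial,\delta f^1_\partial\rangle_{\mathbb{R}^n}-\langle e^1_w,\delta f^2_w\rangle_Z-\langle e^2_w,\delta f^1_w\rangle_Z.$$ Define $$\mathcal{D}=\Big\{(\delta f_\varepsilon,\delta f_w,\delta f_\partial,e_\varepsilon,e_w,e_\partial)\in\mathcal{B}:\ e_\varepsilon\in H^1([a,b];\mathbb{R}^n),\ \delta f_\varepsilon=\mathcal{J}e_\varepsilon\,\delta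 t+H\delta f_w,\ \delta f_\partial=\tfrac{1}{\sqrt2}P_1\big(e_\varepsilon(b)-e_\varepsilon(a)\big)\delta t,\ e_\partial=\tfrac{1}{\sqrt2}\big(e_\varepsilon(b)+e_\varepsilon(a)\big),\ e_w=H^*e_\varepsilon\Big\}.$$ Then $\mathcal{D}$ is a Dirac structure, i.e. $\mathcal{D}^\perp=\mathcal{D}$, where $\mathcal{D}^\perp=\{b\in\mathcal{B}:\langle b,v\rangle_+=0\ \text{for all } v\in\mathcal{D}\}$.
   Context: This is the port structure of a stochastic port-Hamiltonian system $\delta\varepsilon=\mathcal{A}\varepsilon\,\delta t+H(\varepsilon)\delta w$ (Stratonovich sense) with $\mathcal{A}\varepsilon=P_1\frac{\partial}{\partial\zeta}(\mathcal{H}\varepsilon)+P_0\mathcal{H}\varepsilon$; here $e_\varepsilon=\mathcal{H}\varepsilon$ is the effort, $\delta f_\varepsilon=\delta\varepsilon$ the flow, $\delta f_w=\delta w$ the noise flow, $e_w=H^*e_\varepsilon$ the noise effort, and $\delta f_\partial,e_\partial$ the boundary ports. The noise intensity operator is considered at a frozen state, i.e. as a fixed $H\in\mathcal{L}(Z,\mathcal{X})$, and the time increment $\delta t$ is treated as a fixed positive scalar. Equivalently, $\begin{pmatrix}\delta f_\partial\\ e_\partial\delta t\end{pmatrix}=R_0\begin{pmatrix}e_\varepsilon(b)\\ e_\varepsilon(a)\end{pmatrix}\delta t$ with $R_0=\frac{1}{\sqrt2}\begin{pmatrix}P_1&-P_1\\ I&I\end{pmatrix}$. *)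

theory Defs
  imports "HOL-Analysis.Analysis"
begin

text \<open>Elements of X = L2([a,b]; R^n) are represented by functions real => real^'n that are
  Lebesgue measurable on [a,b] and square integrable there; two representatives are
  identified when they agree almost everywhere on [a,b].  All definitions below are
  invariant under such a.e. modification.\<close>

definition L2 :: "real \<Rightarrow> real \<Rightarrow> (real \<Rightarrow> 'a::euclidean_space) \<Rightarrow> bool" where
  "L2 a b f \<longleftrightarrow> f \<in> borel_measurable (lebesgue_on {a..b})
      \<and> (\<lambda>x. (norm (f x))\<^sup>2) integrable_on {a..b}"

definition L2_inner :: "real \<Rightarrow> real \<Rightarrow> (real \<Rightarrow> 'a::euclidean_space) \<Rightarrow> (real \<Rightarrow> 'a) \<Rightarrow> real" where
  "L2_inner a b f g = integral {a..b} (\<lambda>x. f x \<bullet> g x)"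

definition aeq :: "real \<Rightarrow> real \<Rightarrow> (real \<Rightarrow> 'a) \<Rightarrow> (real \<Rightarrow> 'a) \<Rightarrow> bool" where
  "aeq a b f g \<longleftrightarrow> negligible {x \<in> {a..b}. f x \<noteq> g x}"

text \<open>e is in H1([a,b]; R^n) with (absolutely continuous) representative u and weak derivative u':
  u' in L2 and u x = u a + integral of u' over [a,x]; e = u a.e.\<close>
definition H1_rep :: "real \<Rightarrow> real \<Rightarrow> (real \<Rightarrow> 'a::euclidean_space) \<Rightarrow> (real \<Rightarrow> 'a) \<Rightarrow> (real \<Rightarrow> 'a) \<Rightarrow> bool" where
  "H1_rep a b e u u' \<longleftrightarrow> L2 a b u'
      \<and> (\<forall>x\<in>{a..b}. (u' has_integral (u x - u a)) {a..x})
      \<and> aeq a b e u"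

type_synonym ('n, 'z) bond =
  "(real \<Rightarrow> real^'n) \<times> 'z \<times> (real^'n) \<times> (real \<Rightarrow> real^'n) \<times> 'z \<times> (real^'n)"

definition bond_space :: "real \<Rightarrow> real \<Rightarrow> ('n::finite, 'z::real_inner) bond set" where
  "bond_space a b = {(f, fw, fd, e, ew, ed). L2 a b f \<and> L2 a b e}"

definition plus_pairing :: "real \<Rightarrow> real \<Rightarrow> ('n::finite, 'z::real_inner) bond \<Rightarrow> ('n, 'z) bond \<Rightarrow> real" where
  "plus_pairing a b v1 v2 = (case v1 of (f1, fw1, fd1, e1, ew1, ed1) \<Rightarrow>
      case v2 of (f2, fw2, fd2, e2, ew2, ed2) \<Rightarrow>
        L2_inner a b e1 f2 + L2_inner a b e2 f1 - ed1 \<bullet> fd2 - ed2 \<bullet> fd1 - ew1 \<bullet> fw2 - ew2 \<bullet> fw1)"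

definition orth_plus :: "real \<Rightarrow> real \<Rightarrow> ('n::finite, 'z::real_inner) bond set \<Rightarrow> ('n, 'z) bond set" where
  "orth_plus a b D = {v \<in> bond_space a b. \<forall>w\<in>D. plus_pairing a b v w = 0}"

definition sph_dirac :: "real \<Rightarrow> real \<Rightarrow> real^'n^'n \<Rightarrow> real^'n^'n \<Rightarrow> ('z \<Rightarrow> real \<Rightarrow> real^'n)
    \<Rightarrow> ((real \<Rightarrow> real^'n) \<Rightarrow> 'z) \<Rightarrow> real \<Rightarrow> ('n::finite, 'z::real_inner) bond set" where
  "sph_dirac a b P1 P0 H Hs dt = {(f, fw, fd, e, ew, ed). L2 a b f \<and> L2 a b e \<and>
      (\<exists>u u'. H1_rep a b e u u'
         \<and> aeq a b f (\<lambda>x. dt *\<^sub>R (P1 *v u' x + P0 *v u x) + H fw x)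
         \<and> fd = (dt / sqrt 2) *\<^sub>R (P1 *v (u b - u a))
         \<and> ed = (1 / sqrt 2) *\<^sub>R (u b + u a))
      \<and> ew = Hs e}"

end

theory Submission
  imports Defs
begin

text \<open>
  For two elements of \<open>D\<close> with efforts represented by \<open>H\<^sup>1\<close> functions \<open>u\<^sub>1, u\<^sub>2\<close>, the
  adjoint identity for \<open>Hs\<close> cancels the noise ports, and the pairing reduces to
  \<open>dt (\<langle>u\<^sub>1, J u\<^sub>2\<rangle> + \<langle>u\<^sub>2, J u\<^sub>1\<rangle>)\<close> minus the boundary ports. Since \<open>P\<^sub>1\<close> is symmetric
  and \<open>P\<^sub>0\<close> skew, integration by parts turns the first term into \<open>dt [u\<^sub>1 \<cdot> P\<^sub>1 u\<^sub>2]\<^sub>a\<^sup>b\<close>,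
  which the boundary ports cancel exactly; hence \<open>D \<subseteq> D\<^sup>\<perp>\<close>.

  Conversely, pair an element of \<open>D\<^sup>\<perp>\<close> with the elements of \<open>D\<close> generated by an \<open>H\<^sup>1\<close>
  test function \<open>u\<close> and a noise value \<open>z\<close>. Varying \<open>z\<close> gives \<open>e\<^sub>w = Hs e\<close>. Test functions
  vanishing at \<open>a\<close> and \<open>b\<close> show that \<open>e\<close> weakly solves \<open>J e = (f - H f\<^sub>w) / dt\<close>, so by the
  du Bois-Reymond lemma \<open>e\<close> is in \<open>H\<^sup>1\<close> and the flow relation holds. Green's formula then
  leaves a bilinear form in the boundary values of \<open>u\<close>, which are arbitrary; as \<open>P\<^sub>1\<close> is
  invertible this form is nondegenerate, which forces the two boundary port relations.
\<close>

subsection \<open>Square integrable functions\<close>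

lemma L2_imp_absolutely_integrable:
  fixes f :: "real \<Rightarrow> 'a::euclidean_space"
  assumes "L2 a b f"
  shows "f absolutely_integrable_on {a..b}"
proof (rule measurable_bounded_by_integrable_imp_absolutely_integrable)
  show "f \<in> borel_measurable (lebesgue_on {a..b})"
    using assms by (simp add: L2_def)
  show "(\<lambda>x. 1 + (norm (f x))\<^sup>2) integrable_on {a..b}"
    using assms unfolding L2_def by (intro integrable_add) auto
  show "norm (f x) \<le> 1 + (norm (f x))\<^sup>2" for x
    using sum_squares_bound[of "norm (f x)" 1] norm_ge_zero[of "f x"] by (smt (verit) power_one)
qed auto

lemma L2_imp_integrable_on:
  fixes f :: "real \<Rightarrow> 'a::euclidean_space"
  shows "L2 a b f \<Longrightarrow> f integrable_on {a..b}"
  using L2_imp_absolutely_integrable set_lebesgue_integral_eq_integral(1) by blast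

lemma L2_dominated:
  fixes f :: "real \<Rightarrow> 'a::euclidean_space" and g :: "real \<Rightarrow> 'b::euclidean_space"
  assumes "g \<in> borel_measurable (lebesgue_on {a..b})" and "L2 a b f"
    and "\<And>x. x \<in> {a..b} \<Longrightarrow> norm (g x) \<le> C * norm (f x)"
  shows "L2 a b g"
  unfolding L2_def
proof
  show "g \<in> borel_measurable (lebesgue_on {a..b})" by fact
  show "(\<lambda>x. (norm (g x))\<^sup>2) integrable_on {a..b}"
  proof (rule measurable_bounded_by_integrable_imp_integrable)
    show "(\<lambda>x. (norm (g x))\<^sup>2) \<in> borel_measurable (lebesgue_on {a..b})"
      using assms(1) by measurable
    show "(\<lambda>x. C\<^sup>2 * (norm (f x))\<^sup>2) integrable_on {a..b}"
      using assms(2) integrable_cmul[of "\<lambda>x. (norm (f x))\<^sup>2" "{a..b}" "C\<^sup>2"]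
      by (simp add: L2_def)
    show "norm ((norm (g x))\<^sup>2) \<le> C\<^sup>2 * (norm (f x))\<^sup>2" if "x \<in> {a..b}" for x
      using power_mono[OF assms(3)[OF that], of 2] by (simp add: power_mult_distrib)
  qed auto
qed

lemma L2_bounded_linear:
  fixes f :: "real \<Rightarrow> 'a::euclidean_space" and T :: "'a \<Rightarrow> 'b::euclidean_space"
  assumes T: "bounded_linear T" and f: "L2 a b f"
  shows "L2 a b (\<lambda>x. T (f x))"
proof -
  obtain K where K: "\<And>x. norm (T x) \<le> norm x * K"
    using bounded_linear.bounded[OF T] by blast
  have "continuous_on UNIV T"
    by (simp add: T linear_continuous_on)
  then have "(\<lambda>x. T (f x)) \<in> borel_measurable (lebesgue_on {a..b})"
    using borel_measurable_continuous_on[of T f] f by (simp add: L2_def)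
  then show ?thesis
    by (rule L2_dominated[OF _ f, of _ K]) (use K in \<open>simp add: mult.commute\<close>)
qed

lemma L2_scaleR: "L2 a b f \<Longrightarrow> L2 a b (\<lambda>x. c *\<^sub>R f x)"
  using L2_bounded_linear[OF bounded_linear_scaleR_right] .

lemma L2_matrix_vector_mult:
  fixes A :: "real^'n^'m"
  shows "L2 a b f \<Longrightarrow> L2 a b (\<lambda>x. A *v f x)"
  using L2_bounded_linear[OF matrix_vector_mul_bounded_linear] .

lemma L2_add:
  fixes f g :: "real \<Rightarrow> 'a::euclidean_space"
  assumes f: "L2 a b f" and g: "L2 a b g"
  shows "L2 a b (\<lambda>x. f x + g x)"
  unfolding L2_def
proof
  have [measurable]: "f \<in> borel_measurable (lebesgue_on {a..b})" "g \<in> borel_measurable (lebesgue_on {a..b})"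
    using f g by (auto simp: L2_def)
  show "(\<lambda>x. f x + g x) \<in> borel_measurable (lebesgue_on {a..b})"
    by measurable
  show "(\<lambda>x. (norm (f x + g x))\<^sup>2) integrable_on {a..b}"
  proof (rule measurable_bounded_by_integrable_imp_integrable)
    show "(\<lambda>x. 2 * (norm (f x))\<^sup>2 + 2 * (norm (g x))\<^sup>2) integrable_on {a..b}"
      using f g unfolding L2_def by (intro integrable_add integrable_on_cmult_left) auto
    show "norm ((norm (f x + g x))\<^sup>2) \<le> 2 * (norm (f x))\<^sup>2 + 2 * (norm (g x))\<^sup>2" for x
    proof -
      have "(norm (f x + g x))\<^sup>2 \<le> (norm (f x) + norm (g x))\<^sup>2"
        by (intro power_mono norm_triangle_ineq) auto
      also have "\<dots> \<le> 2 * (norm (f x))\<^sup>2 + 2 * (norm (g x))\<^sup>2"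
        using sum_squares_bound[of "norm (f x)" "norm (g x)"] by (simp add: power2_sum)
      finally show ?thesis by simp
    qed
  qed (measurable, auto)
qed

lemma L2_diff:
  fixes f g :: "real \<Rightarrow> 'a::euclidean_space"
  shows "L2 a b f \<Longrightarrow> L2 a b g \<Longrightarrow> L2 a b (\<lambda>x. f x - g x)"
  using L2_add[OF _ L2_scaleR[of a b g "-1"]] by simp

lemma continuous_on_imp_L2:
  fixes f :: "real \<Rightarrow> 'a::euclidean_space"
  assumes "continuous_on {a..b} f"
  shows "L2 a b f"
  unfolding L2_def
proof
  show "f \<in> borel_measurable (lebesgue_on {a..b})"
    by (rule continuous_imp_measurable_on_sets_lebesgue[OF assms]) auto
  show "(\<lambda>x. (norm (f x))\<^sup>2) integrable_on {a..b}"
    by (intro integrable_continuous_interval continuous_intros assms)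
qed

lemma L2_inner_absolutely_integrable:
  fixes f g :: "real \<Rightarrow> 'a::euclidean_space"
  assumes f: "L2 a b f" and g: "L2 a b g"
  shows "(\<lambda>x. f x \<bullet> g x) absolutely_integrable_on {a..b}"
proof (rule measurable_bounded_by_integrable_imp_absolutely_integrable)
  have [measurable]: "f \<in> borel_measurable (lebesgue_on {a..b})" "g \<in> borel_measurable (lebesgue_on {a..b})"
    using f g by (auto simp: L2_def)
  show "(\<lambda>x. f x \<bullet> g x) \<in> borel_measurable (lebesgue_on {a..b})"
    by measurable
  show "(\<lambda>x. (norm (f x))\<^sup>2 + (norm (g x))\<^sup>2) integrable_on {a..b}"
    using f g unfolding L2_def by (intro integrable_add) auto
  show "norm (f x \<bullet> g x) \<le> (norm (f x))\<^sup>2 + (norm (g x))\<^sup>2" for x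
    using Cauchy_Schwarz_ineq2[of "f x" "g x"] sum_squares_bound[of "norm (f x)" "norm (g x)"]
    by simp
qed auto

lemma L2_inner_integrable_on:
  fixes f g :: "real \<Rightarrow> 'a::euclidean_space"
  shows "L2 a b f \<Longrightarrow> L2 a b g \<Longrightarrow> (\<lambda>x. f x \<bullet> g x) integrable_on {a..b}"
  using L2_inner_absolutely_integrable set_lebesgue_integral_eq_integral(1) by blast

lemma L2_inner_add_right:
  fixes f g h :: "real \<Rightarrow> 'a::euclidean_space"
  assumes "L2 a b f" "L2 a b g" "L2 a b h"
  shows "L2_inner a b f (\<lambda>x. g x + h x) = L2_inner a b f g + L2_inner a b f h"
  using integral_add[OF L2_inner_integrable_on L2_inner_integrable_on] assms
  by (simp add: L2_inner_def inner_add_right)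

lemma L2_inner_diff_right:
  fixes f g h :: "real \<Rightarrow> 'a::euclidean_space"
  assumes "L2 a b f" "L2 a b g" "L2 a b h"
  shows "L2_inner a b f (\<lambda>x. g x - h x) = L2_inner a b f g - L2_inner a b f h"
  using integral_diff[OF L2_inner_integrable_on L2_inner_integrable_on] assms
  by (simp add: L2_inner_def inner_diff_right)

lemma L2_inner_scaleR_right: "L2_inner a b f (\<lambda>x. c *\<^sub>R g x) = c * L2_inner a b f g"
  by (simp add: L2_inner_def)

lemma L2_inner_add_eq_integral:
  fixes f1 g1 f2 g2 :: "real \<Rightarrow> 'a::euclidean_space"
  assumes "L2 a b f1" "L2 a b g1" "L2 a b f2" "L2 a b g2"
  shows "L2_inner a b f1 g1 + L2_inner a b f2 g2 = integral {a..b} (\<lambda>x. f1 x \<bullet> g1 x + f2 x \<bullet> g2 x)"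
  unfolding L2_inner_def using assms by (intro integral_add[symmetric] L2_inner_integrable_on)

lemma aeq_refl: "aeq a b f f"
  by (simp add: aeq_def)

lemma L2_inner_aeq_right: "aeq a b g h \<Longrightarrow> L2_inner a b f g = L2_inner a b f h"
  unfolding L2_inner_def aeq_def
  by (rule integral_spike[of "{x \<in> {a..b}. g x \<noteq> h x}"]) auto

lemma L2_inner_aeq_left: "aeq a b g h \<Longrightarrow> L2_inner a b g f = L2_inner a b h f"
  unfolding L2_inner_def aeq_def
  by (rule integral_spike[of "{x \<in> {a..b}. g x \<noteq> h x}"]) auto

subsection \<open>Primitives and integration by parts\<close>

definition primitive_on :: "real \<Rightarrow> real \<Rightarrow> (real \<Rightarrow> 'a::real_normed_vector) \<Rightarrow> (real \<Rightarrow> 'a) \<Rightarrow> bool" where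
  "primitive_on a b u u' \<longleftrightarrow> (\<forall>x\<in>{a..b}. (u' has_integral (u x - u a)) {a..x})"

lemma H1_rep_iff: "H1_rep a b e u u' \<longleftrightarrow> L2 a b u' \<and> primitive_on a b u u' \<and> aeq a b e u"
  by (simp add: H1_rep_def primitive_on_def)

lemma primitive_on_indefinite_integral:
  fixes \<phi> :: "real \<Rightarrow> 'a::banach"
  assumes "\<phi> integrable_on {a..b}"
  shows "primitive_on a b (\<lambda>x. c + integral {a..x} \<phi>) \<phi>"
  unfolding primitive_on_def
proof
  fix x assume "x \<in> {a..b}"
  then have "\<phi> integrable_on {a..x}"
    using integrable_subinterval_real[OF assms] by auto
  then show "(\<phi> has_integral (c + integral {a..x} \<phi> - (c + integral {a..a} \<phi>))) {a..x}"
    by (simp add: integrable_integral)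
qed

lemma primitive_on_bounded_linear:
  assumes "bounded_linear T" and "primitive_on a b u u'"
  shows "primitive_on a b (\<lambda>x. T (u x)) (\<lambda>x. T (u' x))"
  unfolding primitive_on_def
proof
  fix x assume "x \<in> {a..b}"
  then have "(u' has_integral (u x - u a)) {a..x}"
    using assms(2) by (simp add: primitive_on_def)
  from has_integral_linear[OF this assms(1)]
  show "((\<lambda>x. T (u' x)) has_integral T (u x) - T (u a)) {a..x}"
    by (simp add: o_def linear_diff bounded_linear.linear[OF assms(1)])
qed

lemma primitive_on_eq_indefinite_integral:
  assumes "primitive_on a b u u'" and "x \<in> {a..b}"
  shows "u x = u a + integral {a..x} u'"
proof -
  have "integral {a..x} u' = u x - u a"
    using assms by (intro integral_unique) (simp add: primitive_on_def)
  then show ?thesis by simp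
qed

lemma primitive_on_continuous:
  fixes u' :: "real \<Rightarrow> 'a::banach"
  assumes "u' integrable_on {a..b}" and "primitive_on a b u u'"
  shows "continuous_on {a..b} u"
proof -
  have "continuous_on {a..b} (\<lambda>x. u a + integral {a..x} u')"
    by (intro continuous_on_add continuous_on_const indefinite_integral_continuous_1 assms(1))
  then show ?thesis
    by (rule continuous_on_eq[OF _ primitive_on_eq_indefinite_integral[OF assms(2), symmetric]])
qed

lemma primitive_on_L2:
  fixes u :: "real \<Rightarrow> 'a::euclidean_space"
  assumes "L2 a b u'" and "primitive_on a b u u'"
  shows "L2 a b u"
  using primitive_on_continuous[OF L2_imp_integrable_on[OF assms(1)] assms(2)]
  by (rule continuous_on_imp_L2)

lemma primitive_on_with_boundary_values:
  fixes x0 x1 :: "'a::euclidean_space"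
  assumes "a < b"
  obtains u u' where "L2 a b u'" "primitive_on a b u u'" "u a = x0" "u b = x1"
proof
  let ?v = "(1 / (b - a)) *\<^sub>R (x1 - x0)"
  show "L2 a b (\<lambda>x. ?v)"
    by (simp add: continuous_on_imp_L2)
  show "primitive_on a b (\<lambda>x. x0 + integral {a..x} (\<lambda>x. ?v)) (\<lambda>x. ?v)"
    by (intro primitive_on_indefinite_integral integrable_const_ivl)
  show "x0 + integral {a..a} (\<lambda>x. ?v) = x0" and "x0 + integral {a..b} (\<lambda>x. ?v) = x1"
    using assms by simp_all
qed

lemma pair_sigma_finite_lebesgue_on:
  fixes a b :: real
  shows "pair_sigma_finite (lebesgue_on {a..b}) (lebesgue_on {a..b})"
  unfolding pair_sigma_finite_def
  using finite_measure_lebesgue_on finite_measure.axioms(1) by auto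

lemma lebesgue_integral_truncated:
  fixes q :: "real \<Rightarrow> real"
  assumes q: "q absolutely_integrable_on {a..b}" and x: "x \<in> {a..b}"
  shows "(\<integral>y. (if y \<le> x then q y else 0) \<partial>lebesgue_on {a..b}) = integral {a..x} q"
    and "(\<integral>y. (if y < x then q y else 0) \<partial>lebesgue_on {a..b}) = integral {a..x} q"
proof -
  have qM: "integrable (lebesgue_on {a..b}) q"
    using absolutely_integrable_imp_integrable[OF q] by auto
  have q_measurable[measurable]: "q \<in> borel_measurable (lebesgue_on {a..b})"
    using qM by auto
  have id_measurable[measurable]: "(\<lambda>y. y) \<in> borel_measurable (lebesgue_on {a..b})"
    using id_borel_measurable_lebesgue_on by (simp add: id_def)
  have le: "integrable (lebesgue_on {a..b}) (\<lambda>y. if y \<le> x then q y else 0)"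
    by (rule Bochner_Integration.integrable_bound[OF qM]) auto
  have less: "integrable (lebesgue_on {a..b}) (\<lambda>y. if y < x then q y else 0)"
    by (rule Bochner_Integration.integrable_bound[OF qM]) auto
  have "integral {a..b} (\<lambda>y. if y \<le> x then q y else 0) = integral {a..b} (\<lambda>y. if y \<in> {a..x} then q y else 0)"
    by (rule integral_cong) auto
  also have "\<dots> = integral {a..x} q"
    using x integral_restrict_Int[of "{a..b}" "{a..x}" q] by (simp add: Int_absorb1)
  finally have int_le: "integral {a..b} (\<lambda>y. if y \<le> x then q y else 0) = integral {a..x} q" .
  then show "(\<integral>y. (if y \<le> x then q y else 0) \<partial>lebesgue_on {a..b}) = integral {a..x} q"
    using lebesgue_integral_eq_integral[OF le] by simp
  have "integral {a..b} (\<lambda>y. if y < x then q y else 0) = integral {a..b} (\<lambda>y. if y \<le> x then q y else 0)"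
    by (rule integral_spike[where S="{x}"]) auto
  then show "(\<integral>y. (if y < x then q y else 0) \<partial>lebesgue_on {a..b}) = integral {a..x} q"
    using lebesgue_integral_eq_integral[OF less] int_le by simp
qed

lemma iterated_integral_restricted:
  fixes a b :: real and p q :: "real \<Rightarrow> real" and T :: "real \<Rightarrow> real \<Rightarrow> bool"
  defines "M \<equiv> lebesgue_on {a..b}"
  assumes p: "integrable M p" and q: "integrable M q"
    and T: "Measurable.pred (M \<Otimes>\<^sub>M M) (\<lambda>z. T (fst z) (snd z))"
    and trunc: "\<And>x. x \<in> {a..b} \<Longrightarrow> (\<integral>y. (if T x y then q y else 0) \<partial>M) = integral {a..x} q"
  shows "integrable (M \<Otimes>\<^sub>M M) (\<lambda>z. if T (fst z) (snd z) then p (fst z) * q (snd z) else 0)"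
    and "integrable M (\<lambda>x. p x * integral {a..x} q)"
    and "(\<integral>z. (if T (fst z) (snd z) then p (fst z) * q (snd z) else 0) \<partial>(M \<Otimes>\<^sub>M M))
           = (\<integral>x. p x * integral {a..x} q \<partial>M)"
proof -
  interpret pair_sigma_finite M M
    unfolding M_def by (rule pair_sigma_finite_lebesgue_on)
  have [measurable]: "p \<in> borel_measurable M" "q \<in> borel_measurable M"
    "Measurable.pred (M \<Otimes>\<^sub>M M) (\<lambda>z. T (fst z) (snd z))"
    using p q T by auto
  let ?F = "\<lambda>z. if T (fst z) (snd z) then p (fst z) * q (snd z) else 0"
  have "integrable (M \<Otimes>\<^sub>M M) (\<lambda>z. p (fst z) * q (snd z))"
    by (rule Fubini_integrable) (use p q in \<open>simp_all add: abs_mult\<close>)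
  then show F: "integrable (M \<Otimes>\<^sub>M M) ?F"
    by (rule Bochner_Integration.integrable_bound) auto
  have inner: "(\<integral>y. ?F (x, y) \<partial>M) = p x * integral {a..x} q" if "x \<in> space M" for x
  proof -
    have "(\<integral>y. ?F (x, y) \<partial>M) = (\<integral>y. p x * (if T x y then q y else 0) \<partial>M)"
      by (rule Bochner_Integration.integral_cong) auto
    also have "\<dots> = p x * integral {a..x} q"
      using trunc that by (simp add: M_def)
    finally show ?thesis .
  qed
  have "integrable M (\<lambda>x. \<integral>y. ?F (x, y) \<partial>M) = integrable M (\<lambda>x. p x * integral {a..x} q)"
    by (rule Bochner_Integration.integrable_cong[OF refl]) (rule inner)
  then show "integrable M (\<lambda>x. p x * integral {a..x} q)"
    using integrable_fst'[OF F] by simp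
  show "integral\<^sup>L (M \<Otimes>\<^sub>M M) ?F = (\<integral>x. p x * integral {a..x} q \<partial>M)"
  proof -
    have "(\<integral>x. (\<integral>y. ?F (x, y) \<partial>M) \<partial>M) = (\<integral>x. p x * integral {a..x} q \<partial>M)"
      by (rule Bochner_Integration.integral_cong[OF refl]) (rule inner)
    then show ?thesis
      using integral_fst'[OF F] by simp
  qed
qed

text \<open>The two summands integrate \<open>p x * q y\<close> over the two triangles of \<open>[a,b]\<^sup>2\<close>, so by
  Fubini's theorem their sum is the product of the integrals.\<close>

lemma has_integral_mult_indefinite_integrals:
  fixes p q :: "real \<Rightarrow> real"
  assumes p: "p absolutely_integrable_on {a..b}" and q: "q absolutely_integrable_on {a..b}"
  shows "((\<lambda>x. p x * integral {a..x} q + q x * integral {a..x} p)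
           has_integral (integral {a..b} p * integral {a..b} q)) {a..b}"
proof -
  define M where "M = lebesgue_on {a..b}"
  interpret pair_sigma_finite M M
    unfolding M_def by (rule pair_sigma_finite_lebesgue_on)
  have pM: "integrable M p" and qM: "integrable M q"
    using absolutely_integrable_imp_integrable[OF p] absolutely_integrable_imp_integrable[OF q]
    by (auto simp: M_def)
  have [measurable]: "p \<in> borel_measurable M" "q \<in> borel_measurable M"
    "(\<lambda>y. y) \<in> borel_measurable M"
    using pM qM id_borel_measurable_lebesgue_on by (auto simp: M_def id_def)
  note lower = iterated_integral_restricted[of a b p q "\<lambda>x y. y \<le> x", folded M_def]
  note upper = iterated_integral_restricted[of a b q p "\<lambda>x y. y < x", folded M_def]
  have le: "Measurable.pred (M \<Otimes>\<^sub>M M) (\<lambda>z. snd z \<le> fst z)"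
    and less: "Measurable.pred (M \<Otimes>\<^sub>M M) (\<lambda>z. snd z < fst z)"
    by measurable
  note lower = lower[OF pM qM le lebesgue_integral_truncated(1)[OF q, folded M_def]]
  note upper = upper[OF qM pM less lebesgue_integral_truncated(2)[OF p, folded M_def]]
  have pq: "integrable (M \<Otimes>\<^sub>M M) (\<lambda>z. p (fst z) * q (snd z))"
    by (rule Fubini_integrable) (use pM qM in \<open>simp_all add: abs_mult\<close>)
  have upper_swap: "(\<integral>z. (if snd z < fst z then q (fst z) * p (snd z) else 0) \<partial>(M \<Otimes>\<^sub>M M))
      = (\<integral>z. (if fst z < snd z then p (fst z) * q (snd z) else 0) \<partial>(M \<Otimes>\<^sub>M M))"
  proof -
    let ?G = "\<lambda>z. if snd z < fst z then q (fst z) * p (snd z) else 0"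
    have "(\<integral>(x, y). ?G (y, x) \<partial>(M \<Otimes>\<^sub>M M)) = integral\<^sup>L (M \<Otimes>\<^sub>M M) ?G"
      by (rule integral_product_swap) measurable
    moreover have "(\<integral>(x, y). ?G (y, x) \<partial>(M \<Otimes>\<^sub>M M))
        = (\<integral>z. (if fst z < snd z then p (fst z) * q (snd z) else 0) \<partial>(M \<Otimes>\<^sub>M M))"
      by (rule Bochner_Integration.integral_cong) (auto simp: split_beta)
    ultimately show ?thesis by simp
  qed
  have "integral\<^sup>L M p * integral\<^sup>L M q = (\<integral>z. p (fst z) * q (snd z) \<partial>(M \<Otimes>\<^sub>M M))"
    using integral_fst'[OF pq] by simp
  also have "\<dots> = (\<integral>z. (if snd z \<le> fst z then p (fst z) * q (snd z) else 0)
      + (if fst z < snd z then p (fst z) * q (snd z) else 0) \<partial>(M \<Otimes>\<^sub>M M))"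
    by (rule Bochner_Integration.integral_cong) auto
  also have "\<dots> = (\<integral>z. (if snd z \<le> fst z then p (fst z) * q (snd z) else 0) \<partial>(M \<Otimes>\<^sub>M M))
      + (\<integral>z. (if snd z < fst z then q (fst z) * p (snd z) else 0) \<partial>(M \<Otimes>\<^sub>M M))"
    unfolding upper_swap
    by (intro Bochner_Integration.integral_add Bochner_Integration.integrable_bound[OF pq]) auto
  also have "\<dots> = (\<integral>x. p x * integral {a..x} q + q x * integral {a..x} p \<partial>M)"
    using lower upper by simp
  finally have "(\<integral>x. p x * integral {a..x} q + q x * integral {a..x} p \<partial>M) = integral {a..b} p * integral {a..b} q"
    using pM qM by (simp add: M_def lebesgue_integral_eq_integral)
  moreover have "integrable M (\<lambda>x. p x * integral {a..x} q + q x * integral {a..x} p)"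
    using lower upper by simp
  ultimately show ?thesis
    using has_integral_integral_lebesgue_on by (fastforce simp: M_def)
qed

lemma primitive_on_integration_by_parts_real:
  fixes U W p q :: "real \<Rightarrow> real"
  assumes "a \<le> b" and p: "p absolutely_integrable_on {a..b}" and q: "q absolutely_integrable_on {a..b}"
    and U: "primitive_on a b U p" and W: "primitive_on a b W q"
  shows "((\<lambda>x. p x * W x + U x * q x) has_integral (U b * W b - U a * W a)) {a..b}"
proof -
  have b: "b \<in> {a..b}" using assms(1) by simp
  have U_eq: "integral {a..x} p = U x - U a" and W_eq: "integral {a..x} q = W x - W a"
    if "x \<in> {a..b}" for x
    using primitive_on_eq_indefinite_integral[OF U that] primitive_on_eq_indefinite_integral[OF W that]
    by simp_all
  have "((\<lambda>x. p x * integral {a..x} q + q x * integral {a..x} p + p x * W a + q x * U a)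
      has_integral (integral {a..b} p * integral {a..b} q + integral {a..b} p * W a + integral {a..b} q * U a)) {a..b}"
    using p q by (intro has_integral_add has_integral_mult_indefinite_integrals has_integral_mult_left
        integrable_integral set_lebesgue_integral_eq_integral(1))
  moreover have "integral {a..b} p * integral {a..b} q + integral {a..b} p * W a + integral {a..b} q * U a
      = U b * W b - U a * W a"
    by (simp add: U_eq[OF b] W_eq[OF b] algebra_simps)
  ultimately have "((\<lambda>x. p x * integral {a..x} q + q x * integral {a..x} p + p x * W a + q x * U a)
      has_integral (U b * W b - U a * W a)) {a..b}"
    by simp
  then show ?thesis
    by (rule has_integral_eq[rotated]) (simp add: U_eq W_eq algebra_simps)
qed

lemma primitive_on_integration_by_parts:
  fixes u w u' w' :: "real \<Rightarrow> 'a::euclidean_space"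
  assumes "a \<le> b" and "u' absolutely_integrable_on {a..b}" and "w' absolutely_integrable_on {a..b}"
    and "primitive_on a b u u'" and "primitive_on a b w w'"
  shows "((\<lambda>x. u' x \<bullet> w x + u x \<bullet> w' x) has_integral (u b \<bullet> w b - u a \<bullet> w a)) {a..b}"
proof -
  have "((\<lambda>x. (u' x \<bullet> i) * (w x \<bullet> i) + (u x \<bullet> i) * (w' x \<bullet> i))
      has_integral ((u b \<bullet> i) * (w b \<bullet> i) - (u a \<bullet> i) * (w a \<bullet> i))) {a..b}" for i
    using assms by (intro primitive_on_integration_by_parts_real absolutely_integrable_component
        primitive_on_bounded_linear[OF bounded_linear_inner_left])
  then have "((\<lambda>x. \<Sum>i\<in>Basis. (u' x \<bullet> i) * (w x \<bullet> i) + (u x \<bullet> i) * (w' x \<bullet> i))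
      has_integral (\<Sum>i\<in>Basis. (u b \<bullet> i) * (w b \<bullet> i) - (u a \<bullet> i) * (w a \<bullet> i))) {a..b}"
    by (intro has_integral_sum) auto
  moreover have "(\<Sum>i\<in>Basis. (u' x \<bullet> i) * (w x \<bullet> i) + (u x \<bullet> i) * (w' x \<bullet> i))
      = u' x \<bullet> w x + u x \<bullet> w' x" for x
    by (simp add: euclidean_inner[of "u' x" "w x"] euclidean_inner[of "u x" "w' x"] sum.distrib)
  moreover have "(\<Sum>i\<in>Basis. (u b \<bullet> i) * (w b \<bullet> i) - (u a \<bullet> i) * (w a \<bullet> i))
      = u b \<bullet> w b - u a \<bullet> w a"
    by (simp add: euclidean_inner[of "u b" "w b"] euclidean_inner[of "u a" "w a"] sum_subtractf)
  ultimately show ?thesis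
    by simp
qed

subsection \<open>Weak derivatives\<close>

lemma integral_nonneg_eq_0_imp_negligible:
  fixes h :: "real \<Rightarrow> real"
  assumes "h integrable_on {a..b}" and "\<And>x. x \<in> {a..b} \<Longrightarrow> 0 \<le> h x"
    and "integral {a..b} h = 0"
  shows "negligible {x \<in> {a..b}. h x \<noteq> 0}"
proof -
  have "integrable (lebesgue_on {a..b}) h"
    by (intro absolutely_integrable_imp_integrable nonnegative_absolutely_integrable_1 assms) auto
  moreover have "integral\<^sup>L (lebesgue_on {a..b}) h = 0"
    using lebesgue_integral_eq_integral[OF calculation] assms(3) by simp
  moreover have "AE x in lebesgue_on {a..b}. 0 \<le> h x"
    using assms(2) by (intro AE_I2) auto
  ultimately have "AE x in lebesgue_on {a..b}. h x = 0"
    using integral_nonneg_eq_0_iff_AE by blast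
  then have "AE x in lebesgue. x \<in> {a..b} \<longrightarrow> h x = 0"
    by (subst (asm) AE_restrict_space_iff) auto
  then obtain N where "negligible N" "{x. \<not> (x \<in> {a..b} \<longrightarrow> h x = 0)} \<subseteq> N"
    unfolding eventually_ae_filter_negligible by blast
  then show ?thesis
    by (auto elim: negligible_subset)
qed

text \<open>The du Bois-Reymond lemma; the test function is \<open>m\<close> minus its mean.\<close>

lemma mean_zero_orthogonal_imp_aeq_const:
  fixes m :: "real \<Rightarrow> 'a::euclidean_space"
  assumes "a < b" and m: "L2 a b m"
    and orth: "\<And>\<phi>. L2 a b \<phi> \<Longrightarrow> integral {a..b} \<phi> = 0 \<Longrightarrow> integral {a..b} (\<lambda>x. m x \<bullet> \<phi> x) = 0"
  shows "\<exists>c. aeq a b m (\<lambda>x. c)"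
proof
  define c where "c = (1 / (b - a)) *\<^sub>R integral {a..b} m"
  define \<phi> where "\<phi> = (\<lambda>x. m x - c)"
  have Lc: "L2 a b (\<lambda>x. c)"
    by (simp add: continuous_on_imp_L2)
  have L\<phi>: "L2 a b \<phi>"
    unfolding \<phi>_def using m Lc by (rule L2_diff)
  have mean_zero: "integral {a..b} \<phi> = 0"
    using assms(1) integral_diff[OF L2_imp_integrable_on[OF m] L2_imp_integrable_on[OF Lc]]
    by (simp add: \<phi>_def c_def)
  have c_orth: "integral {a..b} (\<lambda>x. c \<bullet> \<phi> x) = 0"
    using integral_linear[OF L2_imp_integrable_on[OF L\<phi>] bounded_linear_inner_right[of c]] mean_zero
    by (simp add: o_def)
  have "integral {a..b} (\<lambda>x. \<phi> x \<bullet> \<phi> x)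
      = integral {a..b} (\<lambda>x. m x \<bullet> \<phi> x) - integral {a..b} (\<lambda>x. c \<bullet> \<phi> x)"
    using integral_diff[OF L2_inner_integrable_on[OF m L\<phi>] L2_inner_integrable_on[OF Lc L\<phi>]]
    by (simp add: \<phi>_def inner_diff_left)
  also have "\<dots> = 0"
    using orth[OF L\<phi> mean_zero] c_orth by simp
  finally have "negligible {x \<in> {a..b}. \<phi> x \<bullet> \<phi> x \<noteq> 0}"
    by (intro integral_nonneg_eq_0_imp_negligible L2_inner_integrable_on L\<phi>) auto
  then show "aeq a b m (\<lambda>x. c)"
    by (simp add: aeq_def \<phi>_def)
qed

lemma weak_derivative_imp_aeq_primitive:
  fixes v w :: "real \<Rightarrow> 'a::euclidean_space"
  assumes "a < b" and v: "L2 a b v" and w: "L2 a b w"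
    and weak: "\<And>u u'. L2 a b u' \<Longrightarrow> primitive_on a b u u' \<Longrightarrow> u a = 0 \<Longrightarrow> u b = 0 \<Longrightarrow>
      L2_inner a b v u' + L2_inner a b u w = 0"
  shows "\<exists>c. aeq a b v (\<lambda>x. c + integral {a..x} w)"
proof -
  define K where "K = (\<lambda>x. integral {a..x} w)"
  have K: "primitive_on a b K w"
    using primitive_on_indefinite_integral[OF L2_imp_integrable_on[OF w], of 0] by (simp add: K_def)
  have LK: "L2 a b K"
    using w K by (rule primitive_on_L2)
  have "integral {a..b} (\<lambda>x. (v x - K x) \<bullet> \<phi> x) = 0"
    if L\<phi>: "L2 a b \<phi>" and mean_zero: "integral {a..b} \<phi> = 0" for \<phi>
  proof -
    define u where "u = (\<lambda>x. integral {a..x} \<phi>)"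
    have u: "primitive_on a b u \<phi>"
      using primitive_on_indefinite_integral[OF L2_imp_integrable_on[OF L\<phi>], of 0] by (simp add: u_def)
    have u_boundary: "u a = 0" "u b = 0"
      using mean_zero by (simp_all add: u_def)
    have Lu: "L2 a b u"
      using L\<phi> u by (rule primitive_on_L2)
    have "((\<lambda>x. \<phi> x \<bullet> K x + u x \<bullet> w x) has_integral 0) {a..b}"
      using primitive_on_integration_by_parts[OF _ L2_imp_absolutely_integrable[OF L\<phi>]
          L2_imp_absolutely_integrable[OF w] u K] assms(1) u_boundary by simp
    then have "integral {a..b} (\<lambda>x. \<phi> x \<bullet> K x) + L2_inner a b u w = 0"
      using integral_add[OF L2_inner_integrable_on[OF L\<phi> LK] L2_inner_integrable_on[OF Lu w]]
      by (simp add: L2_inner_def integral_unique)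
    moreover have "L2_inner a b v \<phi> + L2_inner a b u w = 0"
      using weak[OF L\<phi> u u_boundary] .
    ultimately have "integral {a..b} (\<lambda>x. v x \<bullet> \<phi> x) - integral {a..b} (\<lambda>x. K x \<bullet> \<phi> x) = 0"
      by (simp add: L2_inner_def inner_commute)
    then show ?thesis
      using integral_diff[OF L2_inner_integrable_on[OF v L\<phi>] L2_inner_integrable_on[OF LK L\<phi>]]
      by (simp add: inner_diff_left)
  qed
  then obtain c where "aeq a b (\<lambda>x. v x - K x) (\<lambda>x. c)"
    using mean_zero_orthogonal_imp_aeq_const[OF assms(1) L2_diff[OF v LK]] by blast
  then have "aeq a b v (\<lambda>x. c + K x)"
    by (simp add: aeq_def algebra_simps)
  then show ?thesis
    unfolding K_def by blast
qed

subsection \<open>The port-Hamiltonian operator\<close>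

lemma inner_matrix_vector_mult_transpose: "x \<bullet> (A *v y) = (transpose A *v x) \<bullet> (y::real^'n)"
  by (simp add: dot_lmul_matrix[symmetric])

locale port_operator =
  fixes P1 P0 :: "real^'n::finite^'n"
  assumes P1_symmetric: "transpose P1 = P1"
    and P0_skew: "transpose P0 = - P0"
begin

abbreviation J :: "(real \<Rightarrow> real^'n) \<Rightarrow> (real \<Rightarrow> real^'n) \<Rightarrow> real \<Rightarrow> real^'n" where
  "J u u' x \<equiv> P1 *v u' x + P0 *v u x"

lemma inner_P1_commute: "x \<bullet> (P1 *v y) = (P1 *v x) \<bullet> y"
  using inner_matrix_vector_mult_transpose[of x P1 y] unfolding P1_symmetric .

lemma inner_P0_commute: "x \<bullet> (P0 *v y) = - ((P0 *v x) \<bullet> y)"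
proof -
  have "(- P0) *v x = - (P0 *v x)"
    by (simp add: matrix_vector_mult_def vec_eq_iff sum_negf)
  then show ?thesis
    using inner_matrix_vector_mult_transpose[of x P0 y] unfolding P0_skew by simp
qed

lemma L2_J:
  assumes "L2 a b u'" and "primitive_on a b u u'"
  shows "L2 a b (J u u')"
  using L2_add[OF L2_matrix_vector_mult[OF assms(1)] L2_matrix_vector_mult[OF primitive_on_L2[OF assms]]] .

lemma Green_formula:
  assumes "a \<le> b"
    and u1': "L2 a b u1'" and u1: "primitive_on a b u1 u1'"
    and u2': "L2 a b u2'" and u2: "primitive_on a b u2 u2'"
  shows "L2_inner a b u1 (J u2 u2') + L2_inner a b u2 (J u1 u1') = u1 b \<bullet> (P1 *v u2 b) - u1 a \<bullet> (P1 *v u2 a)"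
proof -
  have "((\<lambda>x. u1' x \<bullet> (P1 *v u2 x) + u1 x \<bullet> (P1 *v u2' x))
      has_integral (u1 b \<bullet> (P1 *v u2 b) - u1 a \<bullet> (P1 *v u2 a))) {a..b}"
    using primitive_on_bounded_linear[OF matrix_vector_mul_bounded_linear u2]
    by (intro primitive_on_integration_by_parts assms L2_imp_absolutely_integrable L2_matrix_vector_mult)
  moreover have "u1 x \<bullet> J u2 u2' x + u2 x \<bullet> J u1 u1' x = u1' x \<bullet> (P1 *v u2 x) + u1 x \<bullet> (P1 *v u2' x)" for x
    using inner_P1_commute[of "u2 x" "u1' x"] inner_P0_commute[of "u1 x" "u2 x"]
    by (simp add: inner_add_right inner_commute)
  ultimately show ?thesis
    using L2_inner_add_eq_integral[OF primitive_on_L2[OF u1' u1] L2_J[OF u2' u2]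
        primitive_on_L2[OF u2' u2] L2_J[OF u1' u1]]
    by (simp add: integral_unique)
qed

lemma weak_solution_imp_H1:
  assumes "a < b" and "invertible P1" and e: "L2 a b e" and g: "L2 a b g"
    and weak: "\<And>u u'. L2 a b u' \<Longrightarrow> primitive_on a b u u' \<Longrightarrow> u a = 0 \<Longrightarrow> u b = 0 \<Longrightarrow>
      L2_inner a b e (J u u') + L2_inner a b u g = 0"
  obtains u u' where "H1_rep a b e u u'" and "aeq a b g (J u u')"
proof -
  \<comment> \<open>\<open>P1 *v e\<close> has weak derivative \<open>w\<close>.\<close>
  define w where "w = (\<lambda>x. g x - P0 *v e x)"
  have Lw: "L2 a b w"
    unfolding w_def by (intro L2_diff L2_matrix_vector_mult e g)
  have weak_P1e: "L2_inner a b (\<lambda>x. P1 *v e x) u' + L2_inner a b u w = 0"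
    if u': "L2 a b u'" and u: "primitive_on a b u u'" and "u a = 0" "u b = 0" for u u'
  proof -
    have "e x \<bullet> J u u' x + u x \<bullet> g x = (P1 *v e x) \<bullet> u' x + u x \<bullet> w x" for x
      using inner_P1_commute[of "e x" "u' x"] inner_P0_commute[of "e x" "u x"]
      by (simp add: w_def inner_add_right inner_diff_right inner_commute)
    then have "L2_inner a b e (J u u') + L2_inner a b u g = L2_inner a b (\<lambda>x. P1 *v e x) u' + L2_inner a b u w"
      using L2_inner_add_eq_integral[OF e L2_J[OF u' u] primitive_on_L2[OF u' u] g]
        L2_inner_add_eq_integral[OF L2_matrix_vector_mult[OF e] u' primitive_on_L2[OF u' u] Lw]
      by simp
    then show ?thesis
      using weak[OF that] by simp
  qed
  then obtain c where c: "aeq a b (\<lambda>x. P1 *v e x) (\<lambda>x. c + integral {a..x} w)"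
    using weak_derivative_imp_aeq_primitive[OF assms(1) L2_matrix_vector_mult[OF e] Lw weak_P1e] by blast
  obtain P1' where P1': "P1 ** P1' = mat 1" "P1' ** P1 = mat 1"
    using assms(2) unfolding invertible_def by blast
  define u where "u = (\<lambda>x. P1' *v (c + integral {a..x} w))"
  define u' where "u' = (\<lambda>x. P1' *v w x)"
  have u: "primitive_on a b u u'"
    unfolding u_def u'_def
    using primitive_on_indefinite_integral[OF L2_imp_integrable_on[OF Lw]]
    by (rule primitive_on_bounded_linear[OF matrix_vector_mul_bounded_linear])
  have u': "L2 a b u'"
    unfolding u'_def using Lw by (rule L2_matrix_vector_mult)
  have e_eq: "e x = u x" if "P1 *v e x = c + integral {a..x} w" for x
    using arg_cong[OF that, of "(*v) P1'"] P1'(2) by (simp add: u_def matrix_vector_mul_assoc)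
  have g_eq: "g x = J u u' x" if "e x = u x" for x
    using that P1'(1) by (simp add: u'_def w_def matrix_vector_mul_assoc)
  have "aeq a b e u" and "aeq a b g (J u u')"
    using c unfolding aeq_def by (auto elim!: negligible_subset dest: e_eq g_eq)
  then show ?thesis
    using u u' by (intro that) (simp_all add: H1_rep_iff)
qed

end

subsection \<open>The Dirac structure\<close>

locale port_Dirac_structure = port_operator P1 P0
  for P1 P0 :: "real^'n::finite^'n" +
  fixes a b dt :: real
    and H :: "'z::real_inner \<Rightarrow> real \<Rightarrow> real^'n"
    and Hs :: "(real \<Rightarrow> real^'n) \<Rightarrow> 'z"
  assumes a_less_b: "a < b"
    and P1_invertible: "invertible P1"
    and L2_H: "\<And>z. L2 a b (H z)"
    and Hs_adjoint: "\<And>e z. L2 a b e \<Longrightarrow> Hs e \<bullet> z = L2_inner a b e (H z)"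
    and dt_pos: "0 < dt"
begin

text \<open>The rows of \<open>R\<^sub>0\<close> (the flow row scaled by \<open>dt\<close>), evaluated at the traces
  \<open>x = e(a)\<close>, \<open>x' = e(b)\<close>.\<close>

abbreviation boundary_flow :: "real^'n \<Rightarrow> real^'n \<Rightarrow> real^'n" where
  "boundary_flow x x' \<equiv> (dt / sqrt 2) *\<^sub>R (P1 *v (x' - x))"

abbreviation boundary_effort :: "real^'n \<Rightarrow> real^'n \<Rightarrow> real^'n" where
  "boundary_effort x x' \<equiv> (1 / sqrt 2) *\<^sub>R (x' + x)"

abbreviation D :: "('n, 'z) bond set" where
  "D \<equiv> sph_dirac a b P1 P0 H Hs dt"

lemma mem_D_iff:
  "(f, fw, fd, e, ew, ed) \<in> D \<longleftrightarrow> L2 a b f \<and> L2 a b e \<and>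
    (\<exists>u u'. H1_rep a b e u u' \<and> aeq a b f (\<lambda>x. dt *\<^sub>R J u u' x + H fw x)
      \<and> fd = boundary_flow (u a) (u b) \<and> ed = boundary_effort (u a) (u b)) \<and> ew = Hs e"
  by (simp add: sph_dirac_def)

lemma boundary_pairing_eq:
  "boundary_effort y y' \<bullet> boundary_flow x x' + boundary_effort x x' \<bullet> boundary_flow y y'
    = dt * (y' \<bullet> (P1 *v x') - y \<bullet> (P1 *v x))"
proof -
  have "(1 / sqrt 2) * (dt / sqrt 2) = dt / 2"
    by (simp add: field_simps)
  moreover have "x \<bullet> (P1 *v y) = y \<bullet> (P1 *v x)" for x y
    using inner_P1_commute[of x y] by (simp add: inner_commute)
  ultimately show ?thesis
    by (simp add: inner_add_left inner_add_right inner_diff_right matrix_vector_mult_diff_distrib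
        matrix_vector_right_distrib algebra_simps)
qed

lemma boundary_pairing_nondegenerate:
  assumes "\<And>x y. ed \<bullet> boundary_flow x y + boundary_effort x y \<bullet> fd = 0"
  shows "ed = 0" and "fd = 0"
proof -
  have "boundary_effort fd fd \<bullet> fd = 0"
    using assms[where x = fd and y = fd] by simp
  then show fd: "fd = 0"
    by (simp add: scaleR_2[symmetric])
  obtain P1' where "P1 ** P1' = mat 1"
    using P1_invertible unfolding invertible_def by blast
  then have "P1 *v (P1' *v ed) = ed"
    by (simp add: matrix_vector_mul_assoc)
  then have "(dt / sqrt 2) * (ed \<bullet> ed) = 0"
    using assms[where x = 0 and y = "P1' *v ed"] fd by simp
  then show "ed = 0"
    using dt_pos by simp
qed

lemma plus_pairing_D_right:
  assumes f1: "L2 a b f1" and e1: "L2 a b e1" and e2: "L2 a b e2"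
    and rep: "H1_rep a b e2 u u'" and f2: "aeq a b f2 (\<lambda>x. dt *\<^sub>R J u u' x + H z x)"
  shows "plus_pairing a b (f1, fw1, fd1, e1, ew1, ed1)
      (f2, z, boundary_flow (u a) (u b), e2, Hs e2, boundary_effort (u a) (u b))
    = dt * L2_inner a b e1 (J u u') + L2_inner a b u (\<lambda>x. f1 x - H fw1 x)
      - ed1 \<bullet> boundary_flow (u a) (u b) - boundary_effort (u a) (u b) \<bullet> fd1 + (Hs e1 - ew1) \<bullet> z"
proof -
  have u': "L2 a b u'" and u: "primitive_on a b u u'" and e2_u: "aeq a b e2 u"
    using rep by (simp_all add: H1_rep_iff)
  have "L2_inner a b e1 f2 = L2_inner a b e1 (\<lambda>x. dt *\<^sub>R J u u' x + H z x)"
    using f2 by (rule L2_inner_aeq_right)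
  also have "\<dots> = dt * L2_inner a b e1 (J u u') + Hs e1 \<bullet> z"
    using L2_inner_add_right[OF e1 L2_scaleR[OF L2_J[OF u' u]] L2_H]
    by (simp add: L2_inner_scaleR_right Hs_adjoint[OF e1])
  finally have e1_f2: "L2_inner a b e1 f2 = dt * L2_inner a b e1 (J u u') + Hs e1 \<bullet> z" .
  have "L2_inner a b e2 f1 - Hs e2 \<bullet> fw1 = L2_inner a b e2 (\<lambda>x. f1 x - H fw1 x)"
    using L2_inner_diff_right[OF e2 f1 L2_H] by (simp add: Hs_adjoint[OF e2])
  also have "\<dots> = L2_inner a b u (\<lambda>x. f1 x - H fw1 x)"
    using e2_u by (rule L2_inner_aeq_left)
  finally show ?thesis
    using e1_f2 by (simp add: plus_pairing_def inner_diff_left algebra_simps)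
qed

lemma pairing_with_D_Green:
  assumes rep1: "H1_rep a b e1 u1 u1'" and f1: "aeq a b f1 (\<lambda>x. dt *\<^sub>R J u1 u1' x + H fw1 x)"
    and u': "L2 a b u'" and u: "primitive_on a b u u'"
  shows "dt * L2_inner a b e1 (J u u') + L2_inner a b u (\<lambda>x. f1 x - H fw1 x)
    = dt * (u1 b \<bullet> (P1 *v u b) - u1 a \<bullet> (P1 *v u a))"
proof -
  have u1': "L2 a b u1'" and u1: "primitive_on a b u1 u1'" and e1_u1: "aeq a b e1 u1"
    using rep1 by (simp_all add: H1_rep_iff)
  have "aeq a b (\<lambda>x. f1 x - H fw1 x) (\<lambda>x. dt *\<^sub>R J u1 u1' x)"
    using f1 by (simp add: aeq_def diff_eq_eq)
  then have "L2_inner a b u (\<lambda>x. f1 x - H fw1 x) = dt * L2_inner a b u (J u1 u1')"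
    by (simp add: L2_inner_aeq_right L2_inner_scaleR_right)
  moreover have "L2_inner a b e1 (J u u') = L2_inner a b u1 (J u u')"
    using e1_u1 by (rule L2_inner_aeq_left)
  ultimately have "dt * L2_inner a b e1 (J u u') + L2_inner a b u (\<lambda>x. f1 x - H fw1 x)
      = dt * (L2_inner a b u1 (J u u') + L2_inner a b u (J u1 u1'))"
    by (simp add: distrib_left)
  also have "\<dots> = dt * (u1 b \<bullet> (P1 *v u b) - u1 a \<bullet> (P1 *v u a))"
    by (simp only: Green_formula[OF less_imp_le[OF a_less_b] u1' u1 u' u])
  finally show ?thesis .
qed

lemma test_element_in_D:
  assumes "L2 a b u'" and "primitive_on a b u u'"
  shows "(\<lambda>x. dt *\<^sub>R J u u' x + H z x, z, boundary_flow (u a) (u b), u, Hs u,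
      boundary_effort (u a) (u b)) \<in> D"
  using assms L2_add[OF L2_scaleR[OF L2_J[OF assms]] L2_H] primitive_on_L2[OF assms] aeq_refl
  unfolding mem_D_iff H1_rep_iff by blast

lemma D_subset_orth_plus: "D \<subseteq> orth_plus a b D"
proof
  fix v assume "v \<in> D"
  then obtain f1 fw1 fd1 e1 ed1 u1 u1' where v: "v = (f1, fw1, fd1, e1, Hs e1, ed1)"
    and f1: "L2 a b f1" and e1: "L2 a b e1" and rep1: "H1_rep a b e1 u1 u1'"
    and f1_eq: "aeq a b f1 (\<lambda>x. dt *\<^sub>R J u1 u1' x + H fw1 x)"
    and fd1: "fd1 = boundary_flow (u1 a) (u1 b)" and ed1: "ed1 = boundary_effort (u1 a) (u1 b)"
    by (cases v) (auto simp: mem_D_iff)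
  have "plus_pairing a b v w = 0" if "w \<in> D" for w
  proof -
    from that obtain f2 fw2 e2 u2 u2' where w: "w = (f2, fw2, boundary_flow (u2 a) (u2 b), e2, Hs e2,
        boundary_effort (u2 a) (u2 b))"
      and e2: "L2 a b e2" and rep2: "H1_rep a b e2 u2 u2'"
      and f2_eq: "aeq a b f2 (\<lambda>x. dt *\<^sub>R J u2 u2' x + H fw2 x)"
      by (cases w) (auto simp: mem_D_iff)
    have u2': "L2 a b u2'" and u2: "primitive_on a b u2 u2'"
      using rep2 by (simp_all add: H1_rep_iff)
    show ?thesis
      unfolding v w plus_pairing_D_right[OF f1 e1 e2 rep2 f2_eq] pairing_with_D_Green[OF rep1 f1_eq u2' u2]
      using boundary_pairing_eq[where y = "u1 a" and y' = "u1 b" and x = "u2 a" and x' = "u2 b"]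
      by (simp add: fd1 ed1)
  qed
  then show "v \<in> orth_plus a b D"
    using f1 e1 by (simp add: orth_plus_def bond_space_def v)
qed

lemma orth_plus_pairing_test:
  assumes v: "(f, fw, fd, e, ew, ed) \<in> orth_plus a b D"
    and u': "L2 a b u'" and u: "primitive_on a b u u'"
  shows "dt * L2_inner a b e (J u u') + L2_inner a b u (\<lambda>x. f x - H fw x)
    - ed \<bullet> boundary_flow (u a) (u b) - boundary_effort (u a) (u b) \<bullet> fd + (Hs e - ew) \<bullet> z = 0"
proof -
  have f: "L2 a b f" and e: "L2 a b e"
    using v by (simp_all add: orth_plus_def bond_space_def)
  have rep: "H1_rep a b u u u'"
    using u' u by (simp add: H1_rep_iff aeq_refl)
  have "plus_pairing a b (f, fw, fd, e, ew, ed) (\<lambda>x. dt *\<^sub>R J u u' x + H z x, z,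
      boundary_flow (u a) (u b), u, Hs u, boundary_effort (u a) (u b)) = 0"
    using v test_element_in_D[OF u' u] by (simp add: orth_plus_def)
  then show ?thesis
    by (simp only: plus_pairing_D_right[OF f e primitive_on_L2[OF u' u] rep aeq_refl])
qed

lemma orth_plus_noise_effort:
  assumes "(f, fw, fd, e, ew, ed) \<in> orth_plus a b D"
  shows "ew = Hs e"
proof -
  have "L2 a b (\<lambda>x. 0::real^'n)" and "primitive_on a b (\<lambda>x. 0) (\<lambda>x. 0::real^'n)"
    by (simp_all add: continuous_on_imp_L2 primitive_on_def)
  from orth_plus_pairing_test[OF assms this, where z = "Hs e - ew"]
  have "(Hs e - ew) \<bullet> (Hs e - ew) = 0"
    by (simp add: L2_inner_def)
  then show ?thesis
    by simp
qed

lemma orth_plus_regular: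
  assumes v: "(f, fw, fd, e, ew, ed) \<in> orth_plus a b D"
  obtains u u' where "H1_rep a b e u u'" and "aeq a b f (\<lambda>x. dt *\<^sub>R J u u' x + H fw x)"
proof -
  have f: "L2 a b f" and e: "L2 a b e"
    using v by (simp_all add: orth_plus_def bond_space_def)
  define g where "g = (\<lambda>x. (1 / dt) *\<^sub>R (f x - H fw x))"
  have g: "L2 a b g"
    unfolding g_def using L2_diff[OF f L2_H] by (rule L2_scaleR)
  have weak: "L2_inner a b e (J u u') + L2_inner a b u g = 0"
    if u': "L2 a b u'" and u: "primitive_on a b u u'" and "u a = 0" "u b = 0" for u u'
  proof -
    have "dt * L2_inner a b e (J u u') + L2_inner a b u (\<lambda>x. f x - H fw x) = 0"
      using orth_plus_pairing_test[OF v u' u, where z = 0] that by simp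
    moreover have "dt * L2_inner a b u g = L2_inner a b u (\<lambda>x. f x - H fw x)"
      using dt_pos by (simp add: g_def L2_inner_scaleR_right)
    ultimately have "dt * (L2_inner a b e (J u u') + L2_inner a b u g) = 0"
      by (simp only: distrib_left)
    then show ?thesis
      using dt_pos by simp
  qed
  obtain u u' where rep: "H1_rep a b e u u'" and g_eq: "aeq a b g (J u u')"
    using weak_solution_imp_H1[OF a_less_b P1_invertible e g weak] by blast
  have "f x = dt *\<^sub>R J u u' x + H fw x" if "g x = J u u' x" for x
  proof -
    have "f x - H fw x = dt *\<^sub>R g x"
      using dt_pos by (simp add: g_def)
    then show ?thesis
      using that by (simp add: algebra_simps)
  qed
  then have "aeq a b f (\<lambda>x. dt *\<^sub>R J u u' x + H fw x)"
    using g_eq unfolding aeq_def by (auto elim!: negligible_subset)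
  with rep show ?thesis
    by (rule that)
qed

lemma orth_plus_subset_D: "orth_plus a b D \<subseteq> D"
proof
  fix v assume v_orth: "v \<in> orth_plus a b D"
  obtain f fw fd e ew ed where v: "v = (f, fw, fd, e, ew, ed)"
    by (cases v)
  have f: "L2 a b f" and e: "L2 a b e"
    using v_orth by (simp_all add: v orth_plus_def bond_space_def)
  obtain u1 u1' where rep1: "H1_rep a b e u1 u1'"
    and f_eq: "aeq a b f (\<lambda>x. dt *\<^sub>R J u1 u1' x + H fw x)"
    using orth_plus_regular v_orth unfolding v by blast
  have "(boundary_effort (u1 a) (u1 b) - ed) \<bullet> boundary_flow x y
      + boundary_effort x y \<bullet> (boundary_flow (u1 a) (u1 b) - fd) = 0" for x y
  proof -
    obtain u u' where u': "L2 a b u'" and u: "primitive_on a b u u'" and ux: "u a = x" "u b = y"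
      using primitive_on_with_boundary_values[OF a_less_b] .
    show ?thesis
      using orth_plus_pairing_test[OF v_orth[unfolded v] u' u, where z = 0]
        pairing_with_D_Green[OF rep1 f_eq u' u]
        boundary_pairing_eq[where y = "u1 a" and y' = "u1 b" and x = x and x' = y]
      unfolding ux by (simp only: inner_diff_left inner_diff_right inner_zero_right add_0_right)
  qed
  then have "boundary_effort (u1 a) (u1 b) - ed = 0" and "boundary_flow (u1 a) (u1 b) - fd = 0"
    by (rule boundary_pairing_nondegenerate)+
  then show "v \<in> D"
    using f e rep1 f_eq orth_plus_noise_effort[OF v_orth[unfolded v]]
    unfolding v mem_D_iff by auto
qed

end

theorem theorem2:
  fixes a b dt :: real
    and P1 P0 :: "real^'n^'n"
    and H :: "'z::{real_inner, complete_space} \<Rightarrow> real \<Rightarrow> real^'n"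
    and Hs :: "(real \<Rightarrow> real^'n) \<Rightarrow> 'z"
  assumes ab: "a < b"
    and P1_sym: "transpose P1 = P1" and P1_inv: "invertible P1"
    and P0_skew: "transpose P0 = - P0"
    and H_range: "\<forall>z. L2 a b (H z)"
    and H_add: "\<forall>z1 z2. aeq a b (H (z1 + z2)) (\<lambda>x. H z1 x + H z2 x)"
    and H_scale: "\<forall>c z. aeq a b (H (c *\<^sub>R z)) (\<lambda>x. c *\<^sub>R H z x)"
    and H_bounded: "\<exists>K. \<forall>z. sqrt (L2_inner a b (H z) (H z)) \<le> K * norm z"
    and Hs_adj: "\<forall>e. L2 a b e \<longrightarrow> (\<forall>z. Hs e \<bullet> z = L2_inner a b e (H z))"
    and dt: "dt > 0"
  shows "orth_plus a b (sph_dirac a b P1 P0 H Hs dt) = sph_dirac a b P1 P0 H Hs dt"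
proof -
  interpret port_Dirac_structure P1 P0 a b dt H Hs
    using ab P1_sym P1_inv P0_skew H_range Hs_adj dt by unfold_locales auto
  show ?thesis
    using orth_plus_subset_D D_subset_orth_plus by (rule equalityI)
qed

end
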